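(* For every $n\ge1$, the restriction of the map $\Phi$ to alternating permutations of $[2n]$ (i.e. permutations $\pi_1\cdots\pi_{2n}$ of $[2n]$, all entries positive, with $\pi_1>\pi_2<\pi_3>\cdots>\pi_{2n}$) is a bijection onto the set of labeled Dyck paths of length $2n$ (labeled ballot paths of length $2n$ ending on the $x$-axis); equivalently the inverse map $\Phi^{-1}$ sends labeled Dyck paths of length $2n$ to snakes with no negative entries. Consequently $B(2n,0)=E_{2n}$, the number of alternating permutations of $[2n]$.
   Context: A signed permutation of $[n]$ is a permutation of $[n]$ with some entries negated ($\bar i=-i$), ordered by $\bar n<\cdots<\bar1<1<\cdots<n$; a snake of type $B_n$ is one with $0<\pi_1>\pi_2<\pi_3>\cdots\pi_n$. A labeled ballot path $(P;W)$, $P=p_1\cdots p_n$, $W=w_1\cdots w_n$, is a lattice path from $(0,0)$ with steps $u=(1,1)$, $d=(1,-1)$ never going below the $x$-axis, with integer labels $0\le w_i\le$ height of $p_i$, the height of a step being the smaller $y$-coordinate of its endpoints. $B(n,k)$ counts labeled ballot paths ending at $(n,k)$. Inversion code: for a snake $\pi$ of type $B_n$ and $1\le i\le n$, if $n$ is odd let $c_i(\pi)$ be the number of $k$ with $1\le k\le (n-1)/2$, $i<2k$ and $\pi_{2k}<\pi_i<\pi_{2k+1}$; if $n$ is even let $c_i(\pi)$ be the number of $k$ with $1\le k\le n/2$, $i<2k-1$ and $\pi_{2k}<\pi_i<\pi_{2k-1}$. The map $\Phi$ (a bijection from snakes of type $B_n$ to labeled ballot paths of length $n$): for $k=1,\dots,n$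 let $i$ be the position with $\pi_i\in\{n-k+1,\overline{n-k+1}\}$. If $\pi_i=n-k+1$, set $p_k=u$ if $i$ is odd and $p_k=d$ if $i$ is even, and $w_k=c_i(\pi)$. If $\pi_i=\overline{n-k+1}$, set $p_k=d$ if $i$ is odd and $p_k=u$ if $i$ is even, and $w_k=h_k-c_i(\pi)$ where $h_k$ is the height of the $k$-th step in $p_1\cdots p_k$. Then $\Phi(\pi)=(p_1\cdots p_n;w_1\cdots w_n)$. *)

theory Defs
  imports Main
begin

(* Conventions: a (signed) permutation of [n] is a list xs :: int list of length n;
   positions are 1-indexed via pe xs i = xs ! (i - 1).  The order
   \bar n < ... < \bar 1 < 1 < ... < n is the usual order on int. *)

definition pe :: "int list \<Rightarrow> nat \<Rightarrow> int" where
  "pe xs i = xs ! (i - 1)"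

definition signed_perm :: "nat \<Rightarrow> int list \<Rightarrow> bool" where
  "signed_perm n xs \<longleftrightarrow> length xs = n \<and> distinct (map abs xs) \<and>
     set (map abs xs) = {1..int n}"

definition snakeB :: "nat \<Rightarrow> int list \<Rightarrow> bool" where
  "snakeB n xs \<longleftrightarrow> signed_perm n xs \<and> (n \<ge> 1 \<longrightarrow> 0 < pe xs 1) \<and>
     (\<forall>i. 1 \<le> i \<and> i < n \<longrightarrow>
        (if odd i then pe xs i > pe xs (Suc i) else pe xs i < pe xs (Suc i)))"

definition alt_perm :: "nat \<Rightarrow> int list \<Rightarrow> bool" where
  "alt_perm m xs \<longleftrightarrow> length xs = m \<and> distinct xs \<and> set xs = {1..int m} \<and>
     (\<forall>i. 1 \<le> i \<and> i < m \<longrightarrow>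
        (if odd i then pe xs i > pe xs (Suc i) else pe xs i < pe xs (Suc i)))"

(* Paths: list of steps, True = u = (1,1), False = d = (1,-1). *)
definition ypos :: "bool list \<Rightarrow> nat \<Rightarrow> int" where
  "ypos P j = (\<Sum>s\<leftarrow>take j P. if s then 1 else -1)"

definition step_height :: "bool list \<Rightarrow> nat \<Rightarrow> int" where
  "step_height P k = min (ypos P (k - 1)) (ypos P k)"

definition labeled_ballot :: "nat \<Rightarrow> int \<Rightarrow> bool list \<times> int list \<Rightarrow> bool" where
  "labeled_ballot m e PW \<longleftrightarrow> (case PW of (P, W) \<Rightarrow>
     length P = m \<and> length W = m \<and> (\<forall>j \<le> m. ypos P j \<ge> 0) \<and>
     (\<forall>k. 1 \<le> k \<and> k \<le> m \<longrightarrow> 0 \<le> W ! (k - 1) \<and> W ! (k - 1) \<le> step_height P k) \<and>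
     ypos P m = e)"

definition labeled_ballot_any :: "nat \<Rightarrow> bool list \<times> int list \<Rightarrow> bool" where
  "labeled_ballot_any m PW \<longleftrightarrow> (\<exists>e. labeled_ballot m e PW)"

definition B :: "nat \<Rightarrow> int \<Rightarrow> nat" where
  "B m e = card {PW. labeled_ballot m e PW}"

definition Euler_E :: "nat \<Rightarrow> nat" where
  "Euler_E m = card {xs. alt_perm m xs}"

definition inv_code :: "int list \<Rightarrow> nat \<Rightarrow> nat" where
  "inv_code xs i = (let n = length xs in
     if odd n then card {k. 1 \<le> k \<and> k \<le> (n - 1) div 2 \<and> i < 2 * k \<and>
                          pe xs (2 * k) < pe xs i \<and> pe xs i < pe xs (2 * k + 1)}
     else card {k. 1 \<le> k \<and> k \<le> n div 2 \<and> i < 2 * k - 1 \<and>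
                          pe xs (2 * k) < pe xs i \<and> pe xs i < pe xs (2 * k - 1)})"

definition posk :: "int list \<Rightarrow> nat \<Rightarrow> nat" where
  "posk xs k = (THE i. 1 \<le> i \<and> i \<le> length xs \<and> \<bar>pe xs i\<bar> = int (length xs - k + 1))"

definition Phi_step :: "int list \<Rightarrow> nat \<Rightarrow> bool" where
  "Phi_step xs k = (let i = posk xs k in (0 < pe xs i) = odd i)"

definition Phi_path :: "int list \<Rightarrow> bool list" where
  "Phi_path xs = map (Phi_step xs) [1..<Suc (length xs)]"

definition Phi_label :: "int list \<Rightarrow> nat \<Rightarrow> int" where
  "Phi_label xs k = (let i = posk xs k in
     if 0 < pe xs i then int (inv_code xs i)
     else step_height (take k (Phi_path xs)) k - int (inv_code xs i))"

definition Phi :: "int list \<Rightarrow> bool list \<times> int list" where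
  "Phi xs = (Phi_path xs, map (Phi_label xs) [1..<Suc (length xs)])"

end

theory Submission
  imports Defs
begin

(* Cut an alternating permutation x1 > x2 < x3 > ... > x_m (m even) into pairs (x1,x2),
   (x3,x4), ...; the pair list is a "zigzag".  Place the values m, m-1, ..., 1 one at a time:
   a top creates an open pair (an up step), a bottom closes an open pair (a down step).  The
   number of open pairs is the height of the path, and the inversion code c_i counts the open
   pairs to the right of the value just placed, so it is the position of the insertion. *)

(* An even-length list x1 x2 x3 x4 ... is viewed as the list of pairs (x1,x2),(x3,x4),....
   During the construction below a pair (a, 0) is "open": its top a is placed, its bottom
   is not yet known.  All genuine entries are positive, so 0 never occurs as a real bottom. *)
type_synonym pairs = "(int \<times> int) list"

fun flatten :: "pairs \<Rightarrow> int list" where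
  "flatten [] = []"
| "flatten (p # ps) = fst p # snd p # flatten ps"

fun pairs_of :: "int list \<Rightarrow> pairs" where
  "pairs_of (a # b # xs) = (a, b) # pairs_of xs"
| "pairs_of _ = []"

lemma pairs_of_flatten[simp]: "pairs_of (flatten ps) = ps"
  by (induction ps) auto

lemma flatten_pairs_of: "even (length xs) \<Longrightarrow> flatten (pairs_of xs) = xs"
  by (induction xs rule: pairs_of.induct) auto

lemma set_flatten: "set (flatten ps) = fst ` set ps \<union> snd ` set ps"
  by (induction ps) auto

lemma in_flatten: "q \<in> set ps \<Longrightarrow> fst q \<in> set (flatten ps) \<and> snd q \<in> set (flatten ps)"
  by (auto simp: set_flatten)

lemma length_flatten[simp]: "length (flatten ps) = 2 * length ps"
  by (induction ps) auto

lemma flatten_append[simp]: "flatten (ps @ qs) = flatten ps @ flatten qs"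
  by (induction ps) auto

fun zigzag :: "pairs \<Rightarrow> bool" where
  "zigzag [] = True"
| "zigzag [p] = (snd p < fst p)"
| "zigzag (p # q # ps) = (snd p < fst p \<and> snd p < fst q \<and> zigzag (q # ps))"

lemma zigzag_Cons:
  "zigzag (p # ps) \<longleftrightarrow> snd p < fst p \<and> (ps \<noteq> [] \<longrightarrow> snd p < fst (hd ps)) \<and> zigzag ps"
  by (cases ps) auto

lemma zigzag_append:
  "zigzag (ps @ qs) \<longleftrightarrow> zigzag ps \<and> zigzag qs \<and>
     (ps \<noteq> [] \<longrightarrow> qs \<noteq> [] \<longrightarrow> snd (last ps) < fst (hd qs))"
  by (induction ps) (auto simp: zigzag_Cons)

lemma all_from_one: "(\<forall>i. 1 \<le> i \<and> i < n \<longrightarrow> R i) \<longleftrightarrow> (\<forall>j. Suc j < n \<longrightarrow> R (Suc j))"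
proof (intro iffI allI impI)
  fix i assume h: "\<forall>j. Suc j < n \<longrightarrow> R (Suc j)" and i: "1 \<le> i \<and> i < n"
  then have "Suc (i - 1) = i" by simp
  then show "R i" using h i by metis
qed simp

lemma all_nat_cases: "(\<forall>i. Q i) \<longleftrightarrow> Q 0 \<and> Q 1 \<and> (\<forall>j. Q (Suc (Suc j)))"
proof (intro iffI allI)
  fix i assume "Q 0 \<and> Q 1 \<and> (\<forall>j. Q (Suc (Suc j)))"
  then show "Q i" by (cases i; cases "i - 1") auto
qed simp

definition down_up :: "int list \<Rightarrow> bool" where
  "down_up xs \<longleftrightarrow> (\<forall>i. Suc i < length xs \<longrightarrow>
     (if even i then xs ! Suc i < xs ! i else xs ! i < xs ! Suc i))"

lemma alt_perm_down_up:
  "alt_perm m xs \<longleftrightarrow> length xs = m \<and> distinct xs \<and> set xs = {1..int m} \<and> down_up xs"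
  unfolding alt_perm_def down_up_def all_from_one pe_def by auto

lemma down_up_Cons2:
  "down_up (a # b # xs) \<longleftrightarrow> b < a \<and> (xs \<noteq> [] \<longrightarrow> b < hd xs) \<and> down_up xs"
  unfolding down_up_def by (subst all_nat_cases) (cases xs, auto)

lemma down_up_zigzag: "even (length xs) \<Longrightarrow> down_up xs \<longleftrightarrow> zigzag (pairs_of xs)"
proof (induction xs rule: pairs_of.induct)
  case (1 a b xs)
  then have "even (length xs)" by simp
  then have "pairs_of xs \<noteq> [] \<longleftrightarrow> xs \<noteq> []" and "xs \<noteq> [] \<Longrightarrow> fst (hd (pairs_of xs)) = hd xs"
    by (cases xs rule: pairs_of.cases; simp)+
  with 1 show ?case by (simp add: down_up_Cons2 zigzag_Cons)
qed (simp_all add: down_up_def)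

lemma alt_perm_pairs:
  assumes "alt_perm m xs" "even m"
  shows "flatten (pairs_of xs) = xs" "zigzag (pairs_of xs)" "distinct xs" "set xs = {1..int m}"
  using assms flatten_pairs_of[of xs] down_up_zigzag[of xs] by (auto simp: alt_perm_down_up)

(* Number of open pairs; along the construction it equals the height of the path. *)
definition n_open :: "pairs \<Rightarrow> nat" where
  "n_open ps = length (filter (\<lambda>p. snd p = 0) ps)"

lemma n_open_simps[simp]:
  "n_open [] = 0"
  "n_open (p # ps) = (if snd p = 0 then Suc (n_open ps) else n_open ps)"
  "n_open (ps @ qs) = n_open ps + n_open qs"
  by (auto simp: n_open_def)

lemma n_open_eq_0: "n_open ps = 0 \<longleftrightarrow> (\<forall>p\<in>set ps. snd p \<noteq> 0)"
  by (simp add: n_open_def filter_empty_conv)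

(* An up step with label c inserts a new open pair (t, 0) immediately to the left of the
   longest suffix with at most c open pairs (so for c <= n_open exactly c open pairs lie to
   its right); a down step with label c closes, with bottom t, the open pair having exactly
   c open pairs to its right. *)
fun insert_top :: "nat \<Rightarrow> int \<times> int \<Rightarrow> pairs \<Rightarrow> pairs" where
  "insert_top c x [] = [x]"
| "insert_top c x (p # ps) =
     (if n_open (p # ps) \<le> c then x # p # ps else p # insert_top c x ps)"

fun close_open :: "nat \<Rightarrow> int \<Rightarrow> pairs \<Rightarrow> pairs" where
  "close_open c t [] = []"
| "close_open c t (p # ps) =
     (if snd p = 0 \<and> n_open ps = c then (fst p, t) # ps else p # close_open c t ps)"

definition apply_step :: "bool \<Rightarrow> nat \<Rightarrow> int \<Rightarrow> pairs \<Rightarrow> pairs" where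
  "apply_step up c t ps = (if up then insert_top c (t, 0) ps else close_open c t ps)"

(* Admissible labels: an up step may leave 0..n_open open pairs to its right, a down step
   needs an open pair with c open pairs to its right. *)
definition label_ok :: "bool \<Rightarrow> nat \<Rightarrow> pairs \<Rightarrow> bool" where
  "label_ok up c ps \<longleftrightarrow> (if up then c \<le> n_open ps else c < n_open ps)"

lemma insert_top_decomp:
  "\<exists>L R. ps = L @ R \<and> insert_top c x ps = L @ x # R \<and> (L \<noteq> [] \<longrightarrow> snd (last L) = 0)
     \<and> n_open R = min c (n_open ps)"
proof (induction ps)
  case (Cons p ps)
  show ?case
  proof (cases "n_open (p # ps) \<le> c")
    case True
    then show ?thesis by (intro exI[of _ "[]"] exI[of _ "p # ps"]) auto
  next
    case False
    from Cons.IH obtain L R where LR: "ps = L @ R" "insert_top c x ps = L @ x # R"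
      "L \<noteq> [] \<longrightarrow> snd (last L) = 0" "n_open R = min c (n_open ps)" by blast
    have "n_open R = min c (n_open (p # ps))"
      using LR(4) False by (auto simp: min_def split: if_splits)
    moreover have "snd (last (p # L)) = 0"
    proof (cases "L = []")
      case True
      then have "n_open ps \<le> c" using LR(1,4) by (simp add: min_def split: if_splits)
      then show ?thesis using False True by (simp split: if_splits)
    qed (use LR(3) in simp)
    moreover have "p # ps = (p # L) @ R" "insert_top c x (p # ps) = (p # L) @ x # R"
      using LR(1,2) False by simp_all
    ultimately show ?thesis by blast
  qed
qed simp

lemma close_open_decomp:
  "c < n_open ps \<Longrightarrow> \<exists>L y R. ps = L @ y # R \<and> snd y = 0 \<and> n_open R = c
     \<and> close_open c t ps = L @ (fst y, t) # R"
proof (induction ps)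
  case (Cons p ps)
  show ?case
  proof (cases "snd p = 0 \<and> n_open ps = c")
    case True
    then show ?thesis by (intro exI[of _ "[]"] exI[of _ p] exI[of _ ps]) auto
  next
    case False
    then have "c < n_open ps" using Cons.prems by (auto split: if_splits)
    from Cons.IH[OF this] obtain L y R where LyR: "ps = L @ y # R" "snd y = 0" "n_open R = c"
      "close_open c t ps = L @ (fst y, t) # R" by blast
    then have "p # ps = (p # L) @ y # R" "close_open c t (p # ps) = (p # L) @ (fst y, t) # R"
      using False by simp_all
    with LyR(2,3) show ?thesis by blast
  qed
qed simp

lemma insert_top_split:
  "L = [] \<or> snd (last L) = 0 \<Longrightarrow> n_open R = c \<Longrightarrow> insert_top c x (L @ R) = L @ x # R"
proof (induction L)
  case Nil
  then show ?case by (cases R) auto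
next
  case (Cons p L)
  have "c < n_open (p # L @ R)"
    using Cons.prems by (cases L rule: rev_cases) auto
  moreover have "insert_top c x (L @ R) = L @ x # R"
    using Cons by (cases "L = []") auto
  ultimately show ?case by simp
qed

lemma close_open_split:
  "snd y = 0 \<Longrightarrow> n_open R = c \<Longrightarrow> close_open c t (L @ y # R) = L @ (fst y, t) # R"
  by (induction L) auto

lemma length_apply_step: "length (apply_step up c t ps) = length ps + (if up then 1 else 0)"
proof -
  have "length (insert_top c x ps) = Suc (length ps)" for x
    using insert_top_decomp[of ps c x] by auto
  moreover have "length (close_open c t ps) = length ps"
    by (induction ps) auto
  ultimately show ?thesis by (simp add: apply_step_def)
qed

lemma n_open_apply_step:
  assumes "t \<noteq> 0" "label_ok up c ps"
  shows "n_open (apply_step up c t ps) = (if up then Suc (n_open ps) else n_open ps - 1)"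
proof (cases up)
  case True
  then show ?thesis using insert_top_decomp[of ps c "(t, 0)"] by (auto simp: apply_step_def)
next
  case False
  then have "c < n_open ps" using assms(2) by (simp add: label_ok_def)
  then show ?thesis using False assms(1) close_open_decomp[of c ps t] by (auto simp: apply_step_def)
qed

(* A step is determined by its result: its type by the length, its label by the position at
   which the fresh value t appears. *)
lemma apply_step_inj:
  assumes fresh: "\<forall>q\<in>set ps. fst q \<noteq> t \<and> snd q \<noteq> t"
    and ok: "label_ok up c ps" "label_ok up' c' ps"
    and eq: "apply_step up c t ps = apply_step up' c' t ps"
  shows "up = up' \<and> c = c'"
proof -
  have up: "up = up'"
    using arg_cong[OF eq, of length] by (simp add: length_apply_step split: if_splits)
  show ?thesis
  proof (cases up)
    case True
    obtain L R where LR: "ps = L @ R" "insert_top c (t, 0) ps = L @ (t, 0) # R"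
      "n_open R = min c (n_open ps)"
      using insert_top_decomp[of ps c "(t, 0)"] by blast
    obtain L' R' where LR': "ps = L' @ R'" "insert_top c' (t, 0) ps = L' @ (t, 0) # R'"
      "n_open R' = min c' (n_open ps)"
      using insert_top_decomp[of ps c' "(t, 0)"] by blast
    have "(t, 0) \<notin> set ps" using fresh by (metis fst_conv)
    then have "(t, 0) \<notin> set L \<union> set R" using LR(1) by simp
    moreover have "L @ (t, 0) # R = L' @ (t, 0) # R'"
      using eq True up LR(2) LR'(2) by (simp add: apply_step_def)
    ultimately have "R = R'" by (simp add: append_Cons_eq_iff)
    then show ?thesis using LR(3) LR'(3) ok True up by (simp add: label_ok_def min_def)
  next
    case False
    then have "c < n_open ps" "c' < n_open ps" using ok up by (simp_all add: label_ok_def)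
    then obtain L y R L' y' R' where LyR: "ps = L @ y # R" "n_open R = c"
        "close_open c t ps = L @ (fst y, t) # R"
      and LyR': "ps = L' @ y' # R'" "n_open R' = c'" "close_open c' t ps = L' @ (fst y', t) # R'"
      using close_open_decomp by metis
    let ?no_t = "\<lambda>q. snd q \<noteq> t"
    have split: "L @ (fst y, t) # R = L' @ (fst y', t) # R'"
      using eq False up LyR(3) LyR'(3) by (simp add: apply_step_def)
    have "dropWhile ?no_t (L @ (fst y, t) # R) = (fst y, t) # R"
      using fresh LyR(1) by (simp add: dropWhile_append2)
    moreover have "dropWhile ?no_t (L' @ (fst y', t) # R') = (fst y', t) # R'"
      using fresh LyR'(1) by (simp add: dropWhile_append2)
    ultimately have "R = R'" using split by simp
    then show ?thesis using LyR(2) LyR'(2) up by simp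
  qed
qed

(* Reading an alternating permutation from its largest
   value downwards, restrict t of its pair list is the state after the values > t are placed. *)
definition restrict :: "int \<Rightarrow> pairs \<Rightarrow> pairs" where
  "restrict t ps = map (\<lambda>p. (fst p, if t < snd p then snd p else 0)) (filter (\<lambda>p. t < fst p) ps)"

lemma restrict_simps[simp]:
  "restrict t [] = []"
  "restrict t (p # ps) = (if t < fst p then (fst p, if t < snd p then snd p else 0) # restrict t ps
     else restrict t ps)"
  "restrict t (ps @ qs) = restrict t ps @ restrict t qs"
  by (auto simp: restrict_def)

lemma restrict_id:
  "\<forall>p\<in>set ps. t < fst p \<and> (snd p = 0 \<or> t < snd p) \<Longrightarrow> 0 \<le> t \<Longrightarrow> restrict t ps = ps"
  by (induction ps) auto

lemma restrict_restrict: "t \<le> s \<Longrightarrow> 0 \<le> s \<Longrightarrow> restrict s (restrict t ps) = restrict s ps"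
  by (induction ps) auto

lemma restrict_pred:
  "\<forall>p\<in>set ps. fst p \<noteq> t \<and> snd p \<noteq> t \<Longrightarrow> restrict (t - 1) ps = restrict t ps"
  by (induction ps) auto

lemma restrict_apply_step: "0 \<le> t \<Longrightarrow> restrict t (apply_step up c t ps) = restrict t ps"
proof -
  assume "0 \<le> t"
  moreover have "restrict t (insert_top c (t, 0) ps) = restrict t ps"
    by (induction ps) auto
  moreover have "0 \<le> t \<Longrightarrow> restrict t (close_open c t ps) = restrict t ps"
    by (induction ps) auto
  ultimately show ?thesis by (simp add: apply_step_def)
qed

lemma n_open_restrict:
  "0 \<le> t \<Longrightarrow> \<forall>q\<in>set ps. snd q \<noteq> t \<Longrightarrow>
     n_open (restrict t ps) = length (filter (\<lambda>q. snd q < t \<and> t < fst q) ps)"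
  by (induction ps) auto

(* In a zigzag list, the pair just before a pair with top <= t is open after restriction to t;
   this is why inserting an open pair keeps the restricted list a zigzag. *)
lemma restrict_last_open:
  "zigzag (L @ [(a, b)]) \<Longrightarrow> a \<le> t \<Longrightarrow> restrict t L = [] \<or> snd (last (restrict t L)) = 0"
proof (induction L arbitrary: a b rule: rev_induct)
  case (snoc p L)
  then have zz: "zigzag (L @ [(fst p, snd p)])" and "snd p < a" by (auto simp: zigzag_append)
  show ?case
  proof (cases "t < fst p")
    case False
    with snoc.IH[OF zz] show ?thesis by simp
  qed (use \<open>snd p < a\<close> snoc.prems(2) in auto)
qed simp

fun entries :: "pairs \<Rightarrow> int list" where
  "entries [] = []"
| "entries (p # ps) = (if snd p = 0 then [fst p] else [fst p, snd p]) @ entries ps"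

lemma entries_append[simp]: "entries (ps @ qs) = entries ps @ entries qs"
  by (induction ps) auto

lemma entries_flatten: "\<forall>p\<in>set ps. snd p \<noteq> 0 \<Longrightarrow> entries ps = flatten ps"
  by (induction ps) auto

definition partial_chain :: "int \<Rightarrow> int \<Rightarrow> pairs \<Rightarrow> bool" where
  "partial_chain m t ps \<longleftrightarrow> distinct (entries ps) \<and> set (entries ps) = {t + 1..m} \<and> zigzag ps"

lemma partial_chain_bounds:
  assumes "partial_chain m t ps" "p \<in> set ps"
  shows "t < fst p \<and> (snd p = 0 \<or> t < snd p)"
proof -
  have "fst p \<in> set (entries ps) \<and> (snd p \<noteq> 0 \<longrightarrow> snd p \<in> set (entries ps))"
    using assms(2) by (induction ps) auto
  then show ?thesis using assms(1) unfolding partial_chain_def by auto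
qed

lemma partial_chain_insert_top:
  assumes pc: "partial_chain m t ps" and t: "1 \<le> t" "t \<le> m"
  shows "partial_chain m (t - 1) (insert_top c (t, 0) ps)"
proof -
  obtain L R where LR: "ps = L @ R" "insert_top c (t, 0) ps = L @ (t, 0) # R"
    "L \<noteq> [] \<longrightarrow> snd (last L) = 0"
    using insert_top_decomp[of ps c "(t, 0)"] by blast
  have ent: "entries ps = entries L @ entries R" using LR(1) by simp
  have "t \<notin> set (entries ps)" using pc by (simp add: partial_chain_def)
  then have tn: "t \<notin> set (entries L)" "t \<notin> set (entries R)" using ent by auto
  have "{t..m} = insert t {t + 1..m}" using t by auto
  then have "distinct (entries L @ t # entries R)" "set (entries L @ t # entries R) = {t..m}"
    using pc ent tn unfolding partial_chain_def by auto
  moreover have "R \<noteq> [] \<Longrightarrow> t < fst (hd R)"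
    using partial_chain_bounds[OF pc, of "hd R"] LR(1) by simp
  then have "zigzag (L @ (t, 0) # R)"
    using pc t LR unfolding partial_chain_def by (auto simp: zigzag_append zigzag_Cons)
  ultimately show ?thesis using LR(2) t by (simp add: partial_chain_def)
qed

lemma partial_chain_close_open:
  assumes pc: "partial_chain m t ps" and t: "1 \<le> t" "t \<le> m" and c: "c < n_open ps"
  shows "partial_chain m (t - 1) (close_open c t ps)"
proof -
  obtain L y R where LyR: "ps = L @ y # R" "snd y = 0" "close_open c t ps = L @ (fst y, t) # R"
    using close_open_decomp[OF c] by blast
  have ent: "entries ps = entries L @ fst y # entries R" using LyR(1,2) by simp
  have "t \<notin> set (entries ps)" using pc by (simp add: partial_chain_def)
  then have tn: "t \<notin> set (entries L)" "t \<notin> set (entries R)" "t \<noteq> fst y" using ent by auto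
  have "{t..m} = insert t {t + 1..m}" using t by auto
  then have ent': "distinct (entries L @ fst y # t # entries R)"
    "set (entries L @ fst y # t # entries R) = {t..m}"
    using pc ent tn unfolding partial_chain_def by auto
  have "t < fst y" using partial_chain_bounds[OF pc, of y] LyR(1) by simp
  moreover have "R \<noteq> [] \<Longrightarrow> t < fst (hd R)"
    using partial_chain_bounds[OF pc, of "hd R"] LyR(1) by simp
  ultimately have "zigzag (L @ (fst y, t) # R)"
    using pc t LyR unfolding partial_chain_def by (auto simp: zigzag_append zigzag_Cons)
  then show ?thesis using ent' LyR t by (simp add: partial_chain_def)
qed

lemma partial_chain_apply_step:
  "partial_chain m t ps \<Longrightarrow> 1 \<le> t \<Longrightarrow> t \<le> m \<Longrightarrow> label_ok up c ps \<Longrightarrow>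
     partial_chain m (t - 1) (apply_step up c t ps)"
  by (simp add: apply_step_def label_ok_def partial_chain_insert_top partial_chain_close_open)

fun decode :: "nat \<Rightarrow> bool list \<times> int list \<Rightarrow> nat \<Rightarrow> pairs" where
  "decode m PW 0 = []"
| "decode m PW (Suc k) =
     apply_step (fst PW ! k) (nat (snd PW ! k)) (int m - int k) (decode m PW k)"

lemma ypos_Suc: "k < length P \<Longrightarrow> ypos P (Suc k) = ypos P k + (if P ! k then 1 else -1)"
  by (simp add: ypos_def take_Suc_conv_app_nth)

lemma step_height_Suc: "k < length P \<Longrightarrow> step_height P (Suc k) = ypos P k - (if P ! k then 0 else 1)"
  by (simp add: step_height_def ypos_Suc)

lemma label_ok_iff: "0 \<le> w \<Longrightarrow> label_ok up (nat w) ps \<longleftrightarrow> w \<le> int (n_open ps) - (if up then 0 else 1)"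
  by (auto simp: label_ok_def)

lemma labeled_ballot_iff:
  "labeled_ballot m e (P, W) \<longleftrightarrow> length P = m \<and> length W = m \<and> (\<forall>j\<le>m. 0 \<le> ypos P j) \<and>
     (\<forall>k<m. 0 \<le> W ! k \<and> W ! k \<le> step_height P (Suc k)) \<and> ypos P m = e"
proof -
  have "(\<forall>k. 1 \<le> k \<and> k \<le> m \<longrightarrow> Q k) \<longleftrightarrow> (\<forall>k<m. Q (Suc k))" for Q :: "nat \<Rightarrow> bool"
    using all_from_one[of "Suc m" Q] by (simp add: less_Suc_eq_le Suc_le_eq)
  then show ?thesis unfolding labeled_ballot_def prod.case by simp
qed

lemma ypos_decode:
  assumes "\<forall>j<K. label_ok (fst PW ! j) (nat (snd PW ! j)) (decode m PW j)"
    and "K \<le> length (fst PW)" "K \<le> m"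
  shows "ypos (fst PW) K = int (n_open (decode m PW K))"
  using assms
proof (induction K)
  case (Suc K)
  then have "ypos (fst PW) K = int (n_open (decode m PW K))" by simp
  moreover have "label_ok (fst PW ! K) (nat (snd PW ! K)) (decode m PW K)" using Suc.prems by simp
  ultimately show ?case
    using Suc.prems n_open_apply_step[of "int m - int K"] ypos_Suc[of K "fst PW"]
    by (auto simp: label_ok_def)
qed (simp add: ypos_def)

lemma pe_flatten:
  "j < length ps \<Longrightarrow> pe (flatten ps) (2 * j + 1) = fst (ps ! j) \<and> pe (flatten ps) (2 * j + 2) = snd (ps ! j)"
  by (induction ps arbitrary: j) (auto simp: pe_def nth_Cons split: nat.split)

lemma inv_code_flatten:
  "inv_code (flatten ps) i = card {k. 1 \<le> k \<and> k \<le> length ps \<and> i < 2 * k - 1 \<and>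
     snd (ps ! (k - 1)) < pe (flatten ps) i \<and> pe (flatten ps) i < fst (ps ! (k - 1))}"
proof -
  have "pe (flatten ps) (2 * k) = snd (ps ! (k - 1)) \<and> pe (flatten ps) (2 * k - 1) = fst (ps ! (k - 1))"
    if "1 \<le> k" "k \<le> length ps" for k
    using pe_flatten[of "k - 1" ps] that by (cases k) simp_all
  then show ?thesis unfolding inv_code_def Let_def by (auto intro!: arg_cong[where f = card])
qed

lemma inv_code_at_pair:
  assumes i: "i = 2 * length L + 1 \<or> i = 2 * length L + 2"
  shows "inv_code (flatten (L @ p # R)) i =
    length (filter (\<lambda>q. snd q < pe (flatten (L @ p # R)) i \<and> pe (flatten (L @ p # R)) i < fst q) R)"
proof -
  define Q where "Q = (\<lambda>q. snd q < pe (flatten (L @ p # R)) i \<and> pe (flatten (L @ p # R)) i < fst q)"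
  have "{k. 1 \<le> k \<and> k \<le> length (L @ p # R) \<and> i < 2 * k - 1 \<and> Q ((L @ p # R) ! (k - 1))}
      = (\<lambda>j. j + length L + 2) ` {j. j < length R \<and> Q (R ! j)}"
  proof (intro set_eqI iffI)
    fix k assume k: "k \<in> {k. 1 \<le> k \<and> k \<le> length (L @ p # R) \<and> i < 2 * k - 1 \<and> Q ((L @ p # R) ! (k - 1))}"
    then have le: "length L + 2 \<le> k" using i by auto
    then have "k - 1 = length L + Suc (k - length L - 2)" by simp
    then have "(L @ p # R) ! (k - 1) = R ! (k - length L - 2)"
      by (simp only: nth_append_length_plus nth_Cons_Suc)
    then show "k \<in> (\<lambda>j. j + length L + 2) ` {j. j < length R \<and> Q (R ! j)}"
      using k le by (intro image_eqI[of _ _ "k - length L - 2"]) auto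
  qed (use i in \<open>auto simp: nth_append\<close>)
  also have "card \<dots> = card {j. j < length R \<and> Q (R ! j)}"
    by (rule card_image) (simp add: inj_on_def)
  also have "\<dots> = length (filter Q R)"
    by (simp add: length_filter_conv_card)
  finally show ?thesis unfolding inv_code_flatten Q_def .
qed

lemma posk_eq:
  assumes dist: "distinct xs" and pos: "\<forall>x\<in>set xs. 0 < x"
    and i: "1 \<le> i" "i \<le> length xs" and val: "pe xs i = int (length xs - k + 1)"
  shows "posk xs k = i"
  unfolding posk_def
proof (rule the_equality)
  fix j assume j: "1 \<le> j \<and> j \<le> length xs \<and> \<bar>pe xs j\<bar> = int (length xs - k + 1)"
  then have "xs ! (j - 1) \<in> set xs" by (intro nth_mem) linarith
  then have "xs ! (j - 1) = xs ! (i - 1)" using pos val j by (auto simp: pe_def)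
  then have "j - 1 = i - 1" using dist i j nth_eq_iff_index_eq by fastforce
  then show "j = i" using i j by linarith
qed (use i val in auto)

lemma Phi_at_pair:
  assumes alt: "alt_perm m xs" and ev: "even m"
    and dec: "pairs_of xs = L @ p # R" and tp: "t = fst p \<or> t = snd p"
  shows "Phi_step xs (m + 1 - nat t) = (t = fst p) \<and>
    Phi_label xs (m + 1 - nat t) = int (length (filter (\<lambda>q. snd q < t \<and> t < fst q) R))"
proof -
  have len: "length xs = m" and dist: "distinct xs" and set_xs: "set xs = {1..int m}"
    using alt by (auto simp: alt_perm_def)
  have xs: "xs = flatten (L @ p # R)" using dec flatten_pairs_of[of xs] ev len by simp
  define i where "i = 2 * length L + (if t = fst p then 1 else 2)"
  have pe_i: "pe xs i = t" using xs tp by (auto simp: i_def pe_def nth_append)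
  have i: "1 \<le> i" "i \<le> length xs" using xs by (auto simp: i_def)
  have "t \<in> set xs" using xs tp by auto
  then have t: "1 \<le> t" "t \<le> int m" using set_xs by auto
  have "posk xs (m + 1 - nat t) = i"
    using posk_eq[OF dist _ i] pe_i t set_xs len by auto
  moreover have "fst p \<noteq> snd p" using dist xs by simp
  moreover have "inv_code xs i = length (filter (\<lambda>q. snd q < t \<and> t < fst q) R)"
    using inv_code_at_pair[of i L p R] pe_i xs by (simp add: i_def)
  ultimately show ?thesis using pe_i t tp by (auto simp: Phi_step_def Phi_label_def i_def)
qed

lemma restrict_step:
  assumes alt: "alt_perm m xs" and ev: "even m" and t: "1 \<le> t" "t \<le> int m"
  defines "k \<equiv> m + 1 - nat t"
  shows "0 \<le> Phi_label xs k \<and> label_ok (Phi_step xs k) (nat (Phi_label xs k)) (restrict t (pairs_of xs))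
    \<and> restrict (t - 1) (pairs_of xs)
        = apply_step (Phi_step xs k) (nat (Phi_label xs k)) t (restrict t (pairs_of xs))"
proof -
  define ps where "ps = pairs_of xs"
  note xs = alt_perm_pairs[OF alt ev, folded ps_def]
  have "t \<in> set (flatten ps)" using xs t by simp
  then obtain p where "p \<in> set ps" and tp: "t = fst p \<or> t = snd p"
    unfolding set_flatten by auto
  then obtain L R where dec: "ps = L @ p # R" by (meson in_set_conv_decomp)
  have "distinct (flatten L @ fst p # snd p # flatten R)" using xs(1,3) dec by simp
  then have "t \<notin> set (flatten L)" "t \<notin> set (flatten R)" using tp by auto
  then have fresh: "\<forall>q\<in>set L \<union> set R. fst q \<noteq> t \<and> snd q \<noteq> t"
    using in_flatten by blast
  have zz: "zigzag (L @ [p])" "snd p < fst p"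
    using xs(2) dec by (auto simp: zigzag_append zigzag_Cons)
  have restrict_L: "restrict (t - 1) L = restrict t L" and restrict_R: "restrict (t - 1) R = restrict t R"
    using restrict_pred fresh by auto
  define c where "c = n_open (restrict t R)"
  have Phi: "Phi_step xs k = (t = fst p)" "Phi_label xs k = int c"
    using Phi_at_pair[OF alt ev dec[unfolded ps_def] tp] n_open_restrict[of t R] fresh t
    by (auto simp: k_def c_def)
  show ?thesis
  proof (cases "t = fst p")
    case True
    have "restrict t L = [] \<or> snd (last (restrict t L)) = 0"
      using restrict_last_open[of L "fst p" "snd p" t] zz True by simp
    then have "insert_top c (t, 0) (restrict t ps) = restrict (t - 1) ps"
      using insert_top_split[of "restrict t L" "restrict t R" c "(t, 0)"] dec True zz
        restrict_L restrict_R by (simp add: c_def)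
    then show ?thesis using Phi True dec by (simp add: c_def ps_def label_ok_def apply_step_def)
  next
    case False
    then have bottom: "t = snd p" "t < fst p" using tp zz by auto
    then have "close_open c t (restrict t ps) = restrict (t - 1) ps"
      using close_open_split[of "(fst p, 0)" "restrict t R" c t "restrict t L"] dec t
        restrict_L restrict_R by (simp add: c_def)
    then show ?thesis using Phi bottom dec by (simp add: c_def ps_def label_ok_def apply_step_def)
  qed
qed

lemma Phi_nth:
  assumes "k < length xs"
  shows "fst (Phi xs) ! k = Phi_step xs (Suc k)" "snd (Phi xs) ! k = Phi_label xs (Suc k)"
  using assms by (simp_all add: Phi_def Phi_path_def del: upt_Suc)

lemma length_Phi: "length (fst (Phi xs)) = length xs" "length (snd (Phi xs)) = length xs"
  by (simp_all add: Phi_def Phi_path_def del: upt_Suc)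

lemma decode_Phi:
  assumes alt: "alt_perm m xs" and ev: "even m"
  shows "k \<le> m \<Longrightarrow> decode m (Phi xs) k = restrict (int m - int k) (pairs_of xs)"
proof (induction k)
  case 0
  have "\<forall>q\<in>set (pairs_of xs). fst q \<le> int m"
    using in_flatten alt_perm_pairs[OF alt ev] by fastforce
  then show ?case by (simp add: restrict_def filter_empty_conv not_less)
next
  case (Suc k)
  define t where "t = int m - int k"
  have "1 \<le> t" "t \<le> int m" "m + 1 - nat t = Suc k" using Suc.prems by (auto simp: t_def)
  moreover have "k < length xs" using Suc.prems alt by (simp add: alt_perm_def)
  ultimately show ?case
    using restrict_step[OF alt ev, of t] Suc by (simp add: Phi_nth t_def add.commute diff_diff_add)
qed

lemma Phi_labels_ok:
  assumes alt: "alt_perm m xs" and ev: "even m" and k: "k < m"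
  shows "0 \<le> snd (Phi xs) ! k \<and> label_ok (fst (Phi xs) ! k) (nat (snd (Phi xs) ! k)) (decode m (Phi xs) k)"
proof -
  define t where "t = int m - int k"
  have "1 \<le> t" "t \<le> int m" "m + 1 - nat t = Suc k" using k by (auto simp: t_def)
  moreover have "k < length xs" using k alt by (simp add: alt_perm_def)
  ultimately show ?thesis
    using restrict_step[OF alt ev, of t] decode_Phi[OF alt ev, of k] k by (simp add: Phi_nth t_def)
qed

lemma decode_Phi_complete:
  assumes alt: "alt_perm m xs" and ev: "even m"
  shows "decode m (Phi xs) m = pairs_of xs" "n_open (pairs_of xs) = 0"
proof -
  have "\<forall>p\<in>set (pairs_of xs). 0 < fst p \<and> 0 < snd p"
    using in_flatten alt_perm_pairs[OF alt ev] by fastforce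
  then show "decode m (Phi xs) m = pairs_of xs" "n_open (pairs_of xs) = 0"
    using decode_Phi[OF alt ev, of m] restrict_id[of "pairs_of xs" 0] by (auto simp: n_open_eq_0)
qed

lemma Phi_inj:
  assumes "alt_perm m xs" "alt_perm m ys" "even m" "Phi xs = Phi ys"
  shows "xs = ys"
  using decode_Phi_complete(1)[of m xs] decode_Phi_complete(1)[of m ys] alt_perm_pairs(1)[of m xs]
    alt_perm_pairs(1)[of m ys] assms by metis

lemma Phi_ballot:
  assumes alt: "alt_perm m xs" and ev: "even m"
  shows "labeled_ballot m 0 (Phi xs)"
proof -
  obtain P W where PW: "Phi xs = (P, W)" by fastforce
  have len: "length P = m" "length W = m"
    using length_Phi[of xs] alt PW by (auto simp: alt_perm_def)
  have ok: "0 \<le> W ! k \<and> label_ok (P ! k) (nat (W ! k)) (decode m (P, W) k)" if "k < m" for k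
    using Phi_labels_ok[OF alt ev that] PW by simp
  have height: "ypos P j = int (n_open (decode m (P, W) j))" if "j \<le> m" for j
    using ypos_decode[of j "(P, W)" m] ok len that by simp
  have "decode m (P, W) m = pairs_of xs" "n_open (pairs_of xs) = 0"
    using decode_Phi_complete[OF alt ev] PW by auto
  moreover have "W ! k \<le> step_height P (Suc k)" if "k < m" for k
    using ok[OF that] label_ok_iff[of "W ! k"] step_height_Suc[of k P] height[of k] len that
    by simp
  ultimately show ?thesis unfolding PW labeled_ballot_iff using len ok height by auto
qed

lemma ballot_labels_ok:
  assumes lb: "labeled_ballot m 0 (P, W)"
  shows "k < m \<Longrightarrow> 0 \<le> W ! k \<and> label_ok (P ! k) (nat (W ! k)) (decode m (P, W) k)"
proof (induction k rule: less_induct)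
  case (less k)
  have len: "length P = m" and W: "0 \<le> W ! k" "W ! k \<le> step_height P (Suc k)"
    using lb less.prems by (auto simp: labeled_ballot_iff)
  have "ypos P k = int (n_open (decode m (P, W) k))"
    using ypos_decode[of k "(P, W)" m] less len by simp
  then show ?case using W label_ok_iff[of "W ! k"] step_height_Suc[of k P] less.prems len by simp
qed

lemma decode_partial_chain:
  assumes lb: "labeled_ballot m 0 (P, W)"
  shows "k \<le> m \<Longrightarrow> partial_chain (int m) (int m - int k) (decode m (P, W) k)"
proof (induction k)
  case (Suc k)
  then have "partial_chain (int m) (int m - int k - 1) (decode m (P, W) (Suc k))"
    using partial_chain_apply_step ballot_labels_ok[OF lb, of k] by simp
  then show ?case by (simp add: algebra_simps)
qed (simp add: partial_chain_def)

lemma decode_bounds: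
  assumes lb: "labeled_ballot m 0 (P, W)" and k: "k \<le> m" and q: "q \<in> set (decode m (P, W) k)"
  shows "int m - int k < fst q \<and> (snd q = 0 \<or> int m - int k < snd q)"
  using partial_chain_bounds[OF decode_partial_chain[OF lb k] q] .

lemma decode_restrict:
  assumes lb: "labeled_ballot m 0 (P, W)" and kk: "k \<le> k'"
  shows "k' \<le> m \<Longrightarrow> restrict (int m - int k) (decode m (P, W) k') = decode m (P, W) k"
  using kk
proof (induction k' rule: dec_induct)
  case base
  then show ?case using restrict_id decode_bounds[OF lb] by simp
next
  case (step k')
  let ?D = "decode m (P, W)"
  have "restrict (int m - int k) (?D (Suc k'))
      = restrict (int m - int k) (restrict (int m - int k') (?D (Suc k')))"
    using restrict_restrict step by simp
  also have "restrict (int m - int k') (?D (Suc k')) = restrict (int m - int k') (?D k')"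
    using restrict_apply_step step by simp
  also have "\<dots> = ?D k'" using restrict_id decode_bounds[OF lb] step by simp
  finally show ?case using step by simp
qed

lemma decode_inj:
  assumes len: "length P = m" "length W = m" "length P' = m" "length W' = m"
    and ok: "\<forall>k<m. 0 \<le> W ! k \<and> label_ok (P ! k) (nat (W ! k)) (decode m (P, W) k)"
      "\<forall>k<m. 0 \<le> W' ! k \<and> label_ok (P' ! k) (nat (W' ! k)) (decode m (P', W') k)"
    and fresh: "\<forall>k<m. \<forall>q\<in>set (decode m (P, W) k). fst q \<noteq> int m - int k \<and> snd q \<noteq> int m - int k"
    and same: "\<forall>k\<le>m. decode m (P, W) k = decode m (P', W') k"
  shows "P = P' \<and> W = W'"
proof -
  have "P ! k = P' ! k \<and> W ! k = W' ! k" if k: "k < m" for k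
  proof -
    define D where "D = decode m (P, W) k"
    have "apply_step (P ! k) (nat (W ! k)) (int m - int k) D
        = apply_step (P' ! k) (nat (W' ! k)) (int m - int k) D"
      using same[rule_format, of "Suc k"] same[rule_format, of k] k by (simp add: D_def)
    moreover have "label_ok (P ! k) (nat (W ! k)) D" "label_ok (P' ! k) (nat (W' ! k)) D"
      using ok same k by (simp_all add: D_def)
    moreover have "\<forall>q\<in>set D. fst q \<noteq> int m - int k \<and> snd q \<noteq> int m - int k"
      using fresh k by (simp add: D_def)
    ultimately have "P ! k = P' ! k \<and> nat (W ! k) = nat (W' ! k)"
      using apply_step_inj by blast
    then show ?thesis using ok k by (metis eq_nat_nat_iff)
  qed
  then show ?thesis using len by (simp add: list_eq_iff_nth_eq)
qed

lemma decode_alt_perm: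
  assumes lb: "labeled_ballot m 0 (P, W)"
  shows "alt_perm m (flatten (decode m (P, W) m))" "even m"
proof -
  define S where "S = decode m (P, W) m"
  have len: "length P = m" and ends: "ypos P m = 0"
    using lb by (auto simp: labeled_ballot_iff)
  have pc: "partial_chain (int m) 0 S" using decode_partial_chain[OF lb, of m] by (simp add: S_def)
  have "n_open S = 0"
    using ypos_decode[of m "(P, W)" m] ballot_labels_ok[OF lb] len ends by (simp add: S_def)
  then have "entries S = flatten S" by (simp add: n_open_eq_0 entries_flatten)
  then have xs: "distinct (flatten S)" "set (flatten S) = {1..int m}" "zigzag (pairs_of (flatten S))"
    using pc by (simp_all add: partial_chain_def)
  then have "length (flatten S) = m" using distinct_card[of "flatten S"] by simp
  then show "even m" by (metis length_flatten dvd_triv_left)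
  with xs \<open>length (flatten S) = m\<close> show "alt_perm m (flatten S)"
    using down_up_zigzag[of "flatten S"] by (simp add: alt_perm_down_up)
qed

(* Surjectivity: Phi maps the permutation decoded from a labeled Dyck path back to the path,
   since both have the same decoding states (decode_restrict, decode_Phi). *)
lemma Phi_surj:
  assumes "labeled_ballot m 0 PW"
  shows "PW \<in> Phi ` {xs. alt_perm m xs}"
proof -
  obtain P W where PW: "PW = (P, W)" by fastforce
  with assms have lb: "labeled_ballot m 0 (P, W)" by simp
  define xs where "xs = flatten (decode m (P, W) m)"
  have alt: "alt_perm m xs" and ev: "even m" using decode_alt_perm[OF lb] by (simp_all add: xs_def)
  obtain P' W' where PW': "Phi xs = (P', W')" by fastforce
  have same: "\<forall>k\<le>m. decode m (P, W) k = decode m (P', W') k"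
    using decode_Phi[OF alt ev] decode_restrict[OF lb] PW' by (simp add: xs_def)
  have len: "length P = m" "length W = m" "length P' = m" "length W' = m"
    using lb length_Phi[of xs] PW' alt by (auto simp: labeled_ballot_iff alt_perm_def)
  have ok: "\<forall>k<m. 0 \<le> W ! k \<and> label_ok (P ! k) (nat (W ! k)) (decode m (P, W) k)"
    using ballot_labels_ok[OF lb] by blast
  have ok': "\<forall>k<m. 0 \<le> W' ! k \<and> label_ok (P' ! k) (nat (W' ! k)) (decode m (P', W') k)"
    using Phi_labels_ok[OF alt ev] PW' by simp
  have fresh: "\<forall>k<m. \<forall>q\<in>set (decode m (P, W) k). fst q \<noteq> int m - int k \<and> snd q \<noteq> int m - int k"
  proof (intro allI impI ballI)
    fix k q assume "k < m" "q \<in> set (decode m (P, W) k)"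
    then show "fst q \<noteq> int m - int k \<and> snd q \<noteq> int m - int k"
      using decode_bounds[OF lb, of k q] by auto
  qed
  have "P = P' \<and> W = W'" using decode_inj[OF len ok ok' fresh same] .
  then have "Phi xs = PW" using PW' PW by simp
  then show ?thesis using alt by blast
qed

theorem theorem4p6:
  fixes n :: nat
  assumes "n \<ge> 1"
  shows "bij_betw Phi {xs. alt_perm (2 * n) xs} {PW. labeled_ballot (2 * n) 0 PW}
         \<and> B (2 * n) 0 = Euler_E (2 * n)"
proof -
  have ev: "even (2 * n)" by simp
  have "inj_on Phi {xs. alt_perm (2 * n) xs}"
    using Phi_inj[OF _ _ ev] by (auto simp: inj_on_def)
  moreover have "Phi ` {xs. alt_perm (2 * n) xs} = {PW. labeled_ballot (2 * n) 0 PW}"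
    using Phi_ballot[OF _ ev] Phi_surj[of "2 * n"] by auto
  ultimately have bij: "bij_betw Phi {xs. alt_perm (2 * n) xs} {PW. labeled_ballot (2 * n) 0 PW}"
    by (simp add: bij_betw_def)
  then show ?thesis
    using bij_betw_same_card[OF bij] by (simp add: B_def Euler_E_def)
qed

end
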